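(* Let $P(X,Y,Z)=X+\frac{1}{X}+Y+\frac{1}{Y}+Z+\frac{1}{Z}-2$ and let $D_P=\{(X,Y,Z)\in(\mathbb{C}^\times)^3 : P(X,Y,Z)=0,\ |X|=|Y|=1,\ |Z|>1\}$. The map $(X,Y,Z)\mapsto Z$ defines a fibration of $D_P\setminus\{(-1,-1,3+2\sqrt{2})\}$ above the interval $(1,3+2\sqrt{2})$. The fibres are homeomorphic to $S^1$ and, writing $X=e^{i\phi}$, $Y=e^{i\psi}$, the fibre above $Z$ is given by the implicit equation \[ \cos\phi+\cos\psi = 1-\frac12\Big(Z+\frac1Z\Big). \] *)

theory Defs
  imports "HOL-Analysis.Analysis"
begin

definition P :: "complex \<Rightarrow> complex \<Rightarrow> complex \<Rightarrow> complex" where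
  "P X Y Z = X + 1/X + Y + 1/Y + Z + 1/Z - 2"

definition D_P :: "(complex \<times> complex \<times> complex) set" where
  "D_P = {(X, Y, Z). X \<noteq> 0 \<and> Y \<noteq> 0 \<and> Z \<noteq> 0 \<and> P X Y Z = 0 \<and>
                     cmod X = 1 \<and> cmod Y = 1 \<and> cmod Z > 1}"

definition fibre_bundle ::
  "('a::topological_space \<Rightarrow> 'b::topological_space) \<Rightarrow> 'a set \<Rightarrow> 'b set \<Rightarrow> 'c::topological_space set \<Rightarrow> bool" where
  "fibre_bundle p E B F \<longleftrightarrow>
     continuous_on E p \<and> p ` E \<subseteq> B \<and>
     (\<forall>b\<in>B. \<exists>U. openin (top_of_set B) U \<and> b \<in> U \<and>
        (\<exists>h k. homeomorphism {e\<in>E. p e \<in> U} (U \<times> F) h k \<and>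
               (\<forall>e\<in>E. p e \<in> U \<longrightarrow> fst (h e) = p e)))"

end

theory Submission
  imports Defs
begin

text \<open>For |X| = |Y| = 1 the equation P = 0 says Z + 1/Z = 2 - 2 Re X - 2 Re Y, a real number
in [-2, 6]. Since |Z| > 1 this forces Z to be real with 1 < Z \<le> 3 + 2 sqrt 2, and the endpoint
is attained only at X = Y = -1. Over Z = t the fibre is the curve Re X + Re Y = r - 2 with
r = 3 - (t + 1/t)/2 \<in> (0, 2). The unit circle minus 1 is parametrised by s \<in> (-2, 2) via
|s| = 1 + Re X with the sign of Im X; in these coordinates the fibre becomes the l1-circle
|s1| + |s2| = r, and radial projection onto the Euclidean unit circle trivialises the whole
family at once.\<close>

lemma fibre_bundle_of_trivialization:
  assumes h: "homeomorphism E (B \<times> F) h k" and fst_h: "\<And>e. e \<in> E \<Longrightarrow> fst (h e) = p e"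
  shows "fibre_bundle p E B F"
  unfolding fibre_bundle_def
proof (intro conjI ballI)
  have "continuous_on E (fst \<circ> h)"
    using h by (intro continuous_on_compose continuous_intros) (auto simp: homeomorphism_def)
  then show "continuous_on E p"
    using fst_h by (auto intro: continuous_on_cong[THEN iffD1])
  show "p ` E \<subseteq> B"
    using h fst_h by (force simp: homeomorphism_def)
  fix b assume "b \<in> B"
  have "{e\<in>E. p e \<in> B} = E"
    using \<open>p ` E \<subseteq> B\<close> by blast
  with h fst_h \<open>b \<in> B\<close> show "\<exists>U. openin (top_of_set B) U \<and> b \<in> U \<and>
      (\<exists>h k. homeomorphism {e\<in>E. p e \<in> U} (U \<times> F) h k \<and> (\<forall>e\<in>E. p e \<in> U \<longrightarrow> fst (h e) = p e))"
    by (intro exI[of _ B] exI[of _ h] exI[of _ k] conjI) simp_all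
qed

lemma homeomorphic_Times_sing: "{b} \<times> F homeomorphic F"
  by (rule homeomorphicI[where f=snd and g="Pair b"]) (auto intro!: continuous_intros)

lemma fibre_homeomorphic_of_trivialization:
  assumes h: "homeomorphism E (B \<times> F) h k" and fst_h: "\<And>e. e \<in> E \<Longrightarrow> fst (h e) = p e"
    and "b \<in> B"
  shows "{e\<in>E. p e = b} homeomorphic F"
proof -
  have "h ` {e\<in>E. p e = b} = {b} \<times> F"
  proof
    show "h ` {e\<in>E. p e = b} \<subseteq> {b} \<times> F"
      using h fst_h by (force simp: homeomorphism_def)
    show "{b} \<times> F \<subseteq> h ` {e\<in>E. p e = b}"
    proof
      fix y assume y: "y \<in> {b} \<times> F"
      then have "k y \<in> E" "h (k y) = y"
        using h \<open>b \<in> B\<close> by (auto simp: homeomorphism_def)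
      with y fst_h[of "k y"] show "y \<in> h ` {e\<in>E. p e = b}"
        by (auto intro!: image_eqI[of _ _ "k y"])
    qed
  qed
  then have "homeomorphism {e\<in>E. p e = b} ({b} \<times> F) h k"
    using h \<open>b \<in> B\<close> by (intro homeomorphism_of_subsets[OF h]) auto
  then show ?thesis
    using homeomorphic_Times_sing homeomorphic_def homeomorphic_trans by blast
qed

lemma unit_add_inverse: "cmod X = 1 \<Longrightarrow> X + 1 / X = of_real (2 * Re X)"
  by (simp add: complex_eq_iff divide_complex_def inverse_complex_def cmod_def power2_eq_square)

lemma real_if_add_inverse_real:
  assumes "cmod Z \<noteq> 1" "Im (Z + 1 / Z) = 0" shows "Im Z = 0"
proof -
  have "Im (Z + 1 / Z) = Im Z * (1 - 1 / (cmod Z)\<^sup>2)"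
    by (simp add: Im_divide norm_complex_def algebra_simps)
  moreover have "(cmod Z)\<^sup>2 \<noteq> 1"
    using assms(1) norm_ge_zero[of Z] by (smt (verit) power2_eq_1_iff)
  ultimately show ?thesis using assms(2) by simp
qed

lemma add_inverse_strict_mono:
  fixes s t :: real assumes "1 \<le> s" "s < t" shows "s + 1 / s < t + 1 / t"
proof -
  have "t + 1 / t - (s + 1 / s) = (t - s) * (1 - 1 / (s * t))"
    using assms by (simp add: field_simps)
  moreover have "1 < s * t"
    using assms less_1_mult less_eq_real_def by fastforce
  then have "0 < (t - s) * (1 - 1 / (s * t))"
    using assms by (simp add: divide_less_eq)
  ultimately show ?thesis by simp
qed

lemma add_inverse_3_plus_2_sqrt_2: "(3 + 2 * sqrt 2) + 1 / (3 + 2 * sqrt 2) = (6::real)"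
proof -
  have "(3 + 2 * sqrt 2) * (3 - 2 * sqrt 2) = (1::real)"
    by (simp add: algebra_simps)
  moreover have "3 + 2 * sqrt 2 \<noteq> (0::real)"
    using real_sqrt_ge_zero[of 2] by linarith
  ultimately have "1 / (3 + 2 * sqrt 2) = 3 - 2 * sqrt (2::real)"
    by (simp add: divide_eq_eq mult.commute)
  then show ?thesis by simp
qed

lemma unit_Re_eq_minus_one: "cmod X = 1 \<Longrightarrow> Re X = -1 \<Longrightarrow> X = -1"
  by (simp add: complex_eq_iff cmod_def)

lemma P_unit_eq_0_iff:
  assumes "cmod X = 1" "cmod Y = 1"
  shows "P X Y Z = 0 \<longleftrightarrow> Z + 1 / Z = of_real (2 - 2 * Re X - 2 * Re Y)"
proof -
  have "P X Y Z = (X + 1 / X) + (Y + 1 / Y) + (Z + 1 / Z) - 2"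
    by (simp add: P_def algebra_simps)
  also have "\<dots> = (Z + 1 / Z) - of_real (2 - 2 * Re X - 2 * Re Y)"
    using assms by (simp add: unit_add_inverse algebra_simps)
  finally show ?thesis by simp
qed

definition D_P_punctured :: "(complex \<times> complex \<times> complex) set" where
  "D_P_punctured = D_P - {(-1, -1, complex_of_real (3 + 2 * sqrt 2))}"

lemma mem_D_P_punctured_iff:
  "(X, Y, Z) \<in> D_P_punctured \<longleftrightarrow>
     cmod X = 1 \<and> cmod Y = 1 \<and> Z \<in> complex_of_real ` {1<..<3 + 2 * sqrt 2} \<and>
     Re X + Re Y = 1 - (Re Z + 1 / Re Z) / 2" (is "?lhs \<longleftrightarrow> ?rhs")
proof
  assume ?lhs
  then have "(X, Y, Z) \<in> D_P"
    and not_vertex: "(X, Y, Z) \<noteq> (-1, -1, complex_of_real (3 + 2 * sqrt 2))"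
    by (simp_all add: D_P_punctured_def)
  then have X: "cmod X = 1" and Y: "cmod Y = 1" and Z: "cmod Z > 1"
    and "P X Y Z = 0"
    by (simp_all add: D_P_def)
  then have P0: "Z + 1 / Z = of_real (2 - 2 * Re X - 2 * Re Y)"
    by (simp add: P_unit_eq_0_iff)
  have "Im Z = 0"
    using Z P0 by (auto intro: real_if_add_inverse_real)
  then obtain t where Zt: "Z = of_real t"
    using complex_is_Real_iff by (metis Reals_cases)
  have u: "t + 1 / t = 2 - 2 * Re X - 2 * Re Y"
    using P0 unfolding Zt by (metis of_real_1 of_real_add of_real_divide of_real_eq_iff)
  have ReXY: "\<bar>Re X\<bar> \<le> 1" "\<bar>Re Y\<bar> \<le> 1"
    using abs_Re_le_cmod[of X] abs_Re_le_cmod[of Y] X Y by auto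
  have "\<bar>t\<bar> > 1"
    using Z Zt by simp
  moreover have "\<not> t < -1"
  proof
    assume "t < -1"
    then have "1 + 1 / 1 < -t + 1 / -t"
      by (intro add_inverse_strict_mono) auto
    with u ReXY show False by linarith
  qed
  ultimately have t1: "1 < t" by linarith
  have "\<not> 3 + 2 * sqrt 2 < t"
  proof
    assume "3 + 2 * sqrt 2 < t"
    then have "6 < t + 1 / t"
      using add_inverse_strict_mono[of "3 + 2 * sqrt 2" t] add_inverse_3_plus_2_sqrt_2 by simp
    with u ReXY show False by linarith
  qed
  moreover have "t \<noteq> 3 + 2 * sqrt 2"
  proof
    assume "t = 3 + 2 * sqrt 2"
    then have "Re X + Re Y = -2"
      using u add_inverse_3_plus_2_sqrt_2 by simp
    then have "Re X = -1" "Re Y = -1"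
      using ReXY by linarith+
    with X Y not_vertex Zt \<open>t = 3 + 2 * sqrt 2\<close> show False
      by (simp add: unit_Re_eq_minus_one)
  qed
  ultimately have "t < 3 + 2 * sqrt 2" by linarith
  with X Y t1 u Zt show ?rhs by (auto simp: field_simps)
next
  assume ?rhs
  then obtain t where X: "cmod X = 1" and Y: "cmod Y = 1" and Zt: "Z = of_real t"
    and t: "1 < t" "t < 3 + 2 * sqrt 2" and sum: "Re X + Re Y = 1 - (t + 1 / t) / 2"
    by auto
  have "t + 1 / t = 2 - 2 * Re X - 2 * Re Y"
    using sum by (simp add: field_simps)
  then have "Z + 1 / Z = of_real (2 - 2 * Re X - 2 * Re Y)"
    unfolding Zt by (metis of_real_1 of_real_add of_real_divide)
  moreover have "Z \<noteq> complex_of_real (3 + 2 * sqrt 2)"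
    using Zt t(2) by (metis of_real_eq_iff order_less_irrefl)
  moreover have "cmod Z > 1"
    using Zt t(1) by simp
  ultimately show ?lhs
    using X Y by (auto simp: D_P_punctured_def D_P_def P_unit_eq_0_iff)
qed

lemma fibre_D_P_punctured_eq:
  assumes z: "z \<in> {1<..<3 + 2 * sqrt 2}"
  shows "{q\<in>D_P_punctured. snd (snd q) = complex_of_real z} =
    {(cis \<phi>, cis \<psi>, complex_of_real z) | \<phi> \<psi>. cos \<phi> + cos \<psi> = 1 - (z + 1 / z) / 2}"
proof (intro set_eqI iffI)
  fix q assume "q \<in> {q\<in>D_P_punctured. snd (snd q) = complex_of_real z}"
  then obtain X Y where q: "q = (X, Y, complex_of_real z)" and "(X, Y, complex_of_real z) \<in> D_P_punctured"
    by (cases q) auto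
  then have X: "cmod X = 1" and Y: "cmod Y = 1" and sum: "Re X + Re Y = 1 - (z + 1 / z) / 2"
    by (simp_all add: mem_D_P_punctured_iff)
  have "X \<noteq> 0" "Y \<noteq> 0"
    using X Y by auto
  then have "cis (Arg X) = X" "cis (Arg Y) = Y"
    using X Y by (simp_all add: cis_Arg sgn_eq)
  moreover from this have "cos (Arg X) + cos (Arg Y) = 1 - (z + 1 / z) / 2"
    using sum by (metis cis.sel(1))
  ultimately show "q \<in> {(cis \<phi>, cis \<psi>, complex_of_real z) | \<phi> \<psi>. cos \<phi> + cos \<psi> = 1 - (z + 1 / z) / 2}"
    unfolding q by (intro CollectI exI[of _ "Arg X"] exI[of _ "Arg Y"]) simp
next
  fix q assume "q \<in> {(cis \<phi>, cis \<psi>, complex_of_real z) | \<phi> \<psi>. cos \<phi> + cos \<psi> = 1 - (z + 1 / z) / 2}"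
  then obtain \<phi> \<psi> where q: "q = (cis \<phi>, cis \<psi>, complex_of_real z)"
    and "cos \<phi> + cos \<psi> = 1 - (z + 1 / z) / 2"
    by blast
  with z show "q \<in> {q\<in>D_P_punctured. snd (snd q) = complex_of_real z}"
    by (simp add: mem_D_P_punctured_iff)
qed

lemma real_sqrt_mult_abs_self: "sqrt (x * \<bar>x\<bar>) = x"
  by (cases "x \<ge> 0") (auto simp: real_sqrt_minus)

lemma real_sqrt_mult_abs_sqrt: "sqrt x * \<bar>sqrt x\<bar> = x"
  by (cases "x \<ge> 0") auto

lemma real_sqrt_power2_eq_abs: "(sqrt x)\<^sup>2 = \<bar>x\<bar>"
proof (cases "x \<ge> 0")
  case False
  then have "sqrt x = - sqrt (- x)"
    by (simp add: real_sqrt_minus)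
  with False show ?thesis by simp
qed simp

text \<open>circle_coord is a homeomorphism from the unit circle minus 1 onto (-2, 2), and circle_point
inverts it; the latter relies on sqrt being odd in Isabelle (sqrt (- x) = - sqrt x).\<close>

definition circle_coord :: "complex \<Rightarrow> real" where
  "circle_coord X = Im X * \<bar>Im X\<bar> / (1 - Re X)"

definition circle_point :: "real \<Rightarrow> complex" where
  "circle_point s = Complex (\<bar>s\<bar> - 1) (sqrt (s * (2 - \<bar>s\<bar>)))"

lemma abs_circle_coord:
  assumes "cmod X = 1" "Re X < 1" shows "\<bar>circle_coord X\<bar> = 1 + Re X"
proof -
  have "\<bar>Im X\<bar> * \<bar>Im X\<bar> = (1 - Re X) * (1 + Re X)"
    using assms(1) by (simp add: cmod_def power2_eq_square algebra_simps flip: abs_mult)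
  with assms(2) show ?thesis
    by (simp add: circle_coord_def abs_mult)
qed

lemma circle_point_circle_coord:
  assumes "cmod X = 1" "Re X < 1" shows "circle_point (circle_coord X) = X"
proof -
  have "circle_coord X * (2 - \<bar>circle_coord X\<bar>) = Im X * \<bar>Im X\<bar>"
    using assms by (simp only: abs_circle_coord) (simp add: circle_coord_def)
  then show ?thesis
    using assms by (simp add: circle_point_def abs_circle_coord complex_eq_iff real_sqrt_mult_abs_self)
qed

lemma Re_circle_point [simp]: "Re (circle_point s) = \<bar>s\<bar> - 1"
  by (simp add: circle_point_def)

lemma norm_circle_point:
  assumes "\<bar>s\<bar> \<le> 2" shows "cmod (circle_point s) = 1"
proof -
  have "(Im (circle_point s))\<^sup>2 = \<bar>s * (2 - \<bar>s\<bar>)\<bar>"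
    by (simp add: circle_point_def real_sqrt_power2_eq_abs)
  also have "\<dots> = \<bar>s\<bar> * (2 - \<bar>s\<bar>)"
    using assms by (simp add: abs_mult)
  finally have "(Im (circle_point s))\<^sup>2 = \<bar>s\<bar> * (2 - \<bar>s\<bar>)" .
  then show ?thesis
    by (simp add: cmod_def power2_eq_square algebra_simps)
qed

lemma circle_coord_circle_point:
  assumes "\<bar>s\<bar> < 2" shows "circle_coord (circle_point s) = s"
  using assms by (simp add: circle_coord_def circle_point_def real_sqrt_mult_abs_sqrt)

lemma continuous_on_circle_coord [continuous_intros]:
  assumes "continuous_on S f" "\<And>x. x \<in> S \<Longrightarrow> Re (f x) < 1"
  shows "continuous_on S (\<lambda>x. circle_coord (f x))"
proof -
  have "\<forall>x\<in>S. 1 - Re (f x) \<noteq> 0"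
    using assms(2) by fastforce
  then show ?thesis
    unfolding circle_coord_def by (intro continuous_intros assms(1))
qed

lemma continuous_on_circle_point [continuous_intros]:
  "continuous_on S f \<Longrightarrow> continuous_on S (\<lambda>x. circle_point (f x))"
  unfolding circle_point_def by (intro continuous_intros)

definition l1_norm :: "complex \<Rightarrow> real" where
  "l1_norm w = \<bar>Re w\<bar> + \<bar>Im w\<bar>"

lemma l1_norm_zero [simp]: "l1_norm 0 = 0"
  by (simp add: l1_norm_def)

lemma l1_norm_pos: "w \<noteq> 0 \<Longrightarrow> 0 < l1_norm w"
  by (auto simp: l1_norm_def complex_eq_iff add_pos_nonneg add_nonneg_pos)

lemma l1_norm_of_real_mult: "l1_norm (of_real c * w) = \<bar>c\<bar> * l1_norm w"
  by (simp add: l1_norm_def abs_mult algebra_simps)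

lemma l1_norm_sgn_rescale: "w \<noteq> 0 \<Longrightarrow> of_real (l1_norm w / l1_norm (sgn w)) * sgn w = w"
  using l1_norm_pos[of w] by (simp add: l1_norm_def abs_divide add_divide_distrib[symmetric] sgn_eq)

lemma continuous_on_l1_norm [continuous_intros]:
  "continuous_on S f \<Longrightarrow> continuous_on S (\<lambda>x. l1_norm (f x))"
  unfolding l1_norm_def by (intro continuous_intros)

definition fibre_radius :: "real \<Rightarrow> real" where
  "fibre_radius t = 3 - (t + 1 / t) / 2"

lemma fibre_radius_bounds:
  assumes "1 < t" "t < 3 + 2 * sqrt 2" shows "0 < fibre_radius t" "fibre_radius t < 2"
proof -
  have "t + 1 / t < 6"
    using add_inverse_strict_mono[OF _ assms(2)] add_inverse_3_plus_2_sqrt_2 assms(1) by simp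
  then show "0 < fibre_radius t"
    by (simp add: fibre_radius_def)
  have "1 + 1 / 1 < t + 1 / t"
    using add_inverse_strict_mono[OF _ assms(1)] by simp
  then show "fibre_radius t < 2"
    by (simp add: fibre_radius_def)
qed

lemma mem_D_P_punctured_D:
  assumes "(X, Y, Z) \<in> D_P_punctured"
  shows "Re X < 1" "Re Y < 1"
    and "l1_norm (Complex (circle_coord X) (circle_coord Y)) = fibre_radius (Re Z)"
    and "0 < fibre_radius (Re Z)"
proof -
  obtain t where X: "cmod X = 1" and Y: "cmod Y = 1" and Zt: "Z = of_real t"
    and t: "1 < t" "t < 3 + 2 * sqrt 2" and sum: "Re X + Re Y + 2 = fibre_radius t"
    using assms by (auto simp: mem_D_P_punctured_iff fibre_radius_def)
  have "-1 \<le> Re X" "-1 \<le> Re Y"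
    using abs_Re_le_cmod[of X] abs_Re_le_cmod[of Y] X Y by auto
  with fibre_radius_bounds[OF t] sum show "Re X < 1" "Re Y < 1" "0 < fibre_radius (Re Z)"
    by (simp_all add: Zt)
  then show "l1_norm (Complex (circle_coord X) (circle_coord Y)) = fibre_radius (Re Z)"
    using X Y sum by (simp add: l1_norm_def abs_circle_coord Zt)
qed

definition trivialize :: "complex \<times> complex \<times> complex \<Rightarrow> complex \<times> complex" where
  "trivialize q =
     (snd (snd q), sgn (Complex (circle_coord (fst q)) (circle_coord (fst (snd q)))))"

definition untrivialize :: "complex \<times> complex \<Rightarrow> complex \<times> complex \<times> complex" where
  "untrivialize p =
     (let w = of_real (fibre_radius (Re (fst p)) / l1_norm (snd p)) * snd p
      in (circle_point (Re w), circle_point (Im w), fst p))"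

lemma trivialize_D_P_punctured:
  assumes "q \<in> D_P_punctured"
  shows "trivialize q \<in> complex_of_real ` {1<..<3 + 2 * sqrt 2} \<times> sphere 0 1"
    and "untrivialize (trivialize q) = q"
proof -
  obtain X Y Z where q: "q = (X, Y, Z)"
    by (cases q) auto
  with assms have X: "cmod X = 1" and Y: "cmod Y = 1"
    and Z: "Z \<in> complex_of_real ` {1<..<3 + 2 * sqrt 2}"
    by (simp_all add: mem_D_P_punctured_iff)
  define w where "w = Complex (circle_coord X) (circle_coord Y)"
  note D = mem_D_P_punctured_D[OF assms[unfolded q]]
  have "l1_norm w = fibre_radius (Re Z)"
    using D(3) by (simp add: w_def)
  with D(4) have "w \<noteq> 0"
    by auto
  then show "trivialize q \<in> complex_of_real ` {1<..<3 + 2 * sqrt 2} \<times> sphere 0 1"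
    using Z by (simp add: trivialize_def q w_def norm_sgn)
  have "of_real (fibre_radius (Re Z) / l1_norm (sgn w)) * sgn w = w"
    using \<open>l1_norm w = fibre_radius (Re Z)\<close> l1_norm_sgn_rescale[OF \<open>w \<noteq> 0\<close>] by simp
  then show "untrivialize (trivialize q) = q"
    using X Y D(1,2) by (simp add: untrivialize_def trivialize_def q w_def circle_point_circle_coord)
qed

lemma untrivialize_base_times_sphere:
  assumes "p \<in> complex_of_real ` {1<..<3 + 2 * sqrt 2} \<times> sphere 0 1"
  shows "untrivialize p \<in> D_P_punctured"
    and "trivialize (untrivialize p) = p"
proof -
  obtain t u where p: "p = (of_real t, u)" and t: "1 < t" "t < 3 + 2 * sqrt 2"
    and u: "cmod u = 1"
    using assms by auto
  define w where "w = of_real (fibre_radius t / l1_norm u) * u"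
  have "u \<noteq> 0"
    using u by auto
  have r: "0 < fibre_radius t" "fibre_radius t < 2"
    using fibre_radius_bounds[OF t] by auto
  have "l1_norm w = fibre_radius t"
    using r l1_norm_pos[OF \<open>u \<noteq> 0\<close>] unfolding w_def l1_norm_of_real_mult by simp
  then have w: "\<bar>Re w\<bar> + \<bar>Im w\<bar> = fibre_radius t"
    by (simp add: l1_norm_def)
  then have bounds: "\<bar>Re w\<bar> < 2" "\<bar>Im w\<bar> < 2"
    using r abs_ge_zero[of "Re w"] abs_ge_zero[of "Im w"] by linarith+
  have unt: "untrivialize p = (circle_point (Re w), circle_point (Im w), of_real t)"
    by (simp add: untrivialize_def p w_def)
  show "untrivialize p \<in> D_P_punctured"
    unfolding unt mem_D_P_punctured_iff
  proof (intro conjI)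
    show "cmod (circle_point (Re w)) = 1" "cmod (circle_point (Im w)) = 1"
      using bounds by (simp_all add: norm_circle_point)
    show "complex_of_real t \<in> complex_of_real ` {1<..<3 + 2 * sqrt 2}"
      using t by auto
    show "Re (circle_point (Re w)) + Re (circle_point (Im w)) =
        1 - (Re (complex_of_real t) + 1 / Re (complex_of_real t)) / 2"
      using w by (simp add: fibre_radius_def)
  qed
  have "sgn w = u"
    using r l1_norm_pos[OF \<open>u \<noteq> 0\<close>] u unfolding w_def sgn_mult sgn_of_real
    by (simp add: sgn_eq)
  then show "trivialize (untrivialize p) = p"
    using bounds unfolding unt by (simp add: trivialize_def p circle_coord_circle_point)
qed

lemma continuous_on_trivialize: "continuous_on D_P_punctured trivialize"
proof -
  have "Complex (circle_coord (fst q)) (circle_coord (fst (snd q))) \<noteq> 0 \<and>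
      Re (fst q) < 1 \<and> Re (fst (snd q)) < 1" if "q \<in> D_P_punctured" for q
  proof -
    obtain X Y Z where q: "q = (X, Y, Z)"
      by (cases q) auto
    show ?thesis
      using mem_D_P_punctured_D[OF that[unfolded q]] by (auto simp: q)
  qed
  then show ?thesis
    unfolding trivialize_def by (intro continuous_intros) auto
qed

lemma continuous_on_untrivialize:
  "continuous_on (complex_of_real ` {1<..<3 + 2 * sqrt 2} \<times> sphere 0 1) untrivialize"
proof -
  have "l1_norm (snd p) \<noteq> 0 \<and> Re (fst p) \<noteq> 0"
    if "p \<in> complex_of_real ` {1<..<3 + 2 * sqrt 2} \<times> sphere 0 1" for p
  proof -
    have "snd p \<noteq> 0" "Re (fst p) \<noteq> 0"
      using that by auto
    then show ?thesis
      using l1_norm_pos[of "snd p"] by simp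
  qed
  then show ?thesis
    unfolding untrivialize_def Let_def fibre_radius_def by (intro continuous_intros) auto
qed

lemma homeomorphism_trivialize:
  "homeomorphism D_P_punctured (complex_of_real ` {1<..<3 + 2 * sqrt 2} \<times> sphere 0 1)
     trivialize untrivialize"
  by (rule homeomorphismI[OF continuous_on_trivialize continuous_on_untrivialize
        image_subsetI image_subsetI])
    (fact trivialize_D_P_punctured untrivialize_base_times_sphere)+

theorem lemma2p3:
  defines "E \<equiv> D_P - {(-1, -1, complex_of_real (3 + 2 * sqrt 2))}"
  shows "fibre_bundle (\<lambda>q. snd (snd q)) E (complex_of_real ` {1<..<3 + 2 * sqrt 2})
           (sphere (0::complex) 1) \<and>
         (\<forall>z\<in>{1<..<3 + 2 * sqrt 2}.
           {q\<in>E. snd (snd q) = complex_of_real z} homeomorphic sphere (0::complex) 1 \<and>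
           {q\<in>E. snd (snd q) = complex_of_real z} =
             {(cis \<phi>, cis \<psi>, complex_of_real z) | \<phi> \<psi>.
                cos \<phi> + cos \<psi> = 1 - (z + 1 / z) / 2})"
proof -
  have E: "E = D_P_punctured"
    by (simp add: E_def D_P_punctured_def)
  have fst_trivialize: "\<And>q. fst (trivialize q) = snd (snd q)"
    by (simp add: trivialize_def)
  show ?thesis
    unfolding E
    using fibre_bundle_of_trivialization[OF homeomorphism_trivialize fst_trivialize]
      fibre_homeomorphic_of_trivialization[OF homeomorphism_trivialize fst_trivialize]
      fibre_D_P_punctured_eq
    by blast
qed

end
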